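(* For every $\beta>0$, the origin is the unique equilibrium of the ODE $\dot x=f(x)$ on $\mathbb R^n\times\mathbb R^n$, $$f(x_1,x_2)=\begin{bmatrix}-(1+\beta)Dx_1+\beta Dx_2+\gamma DP\big(M(x_2+Q^* )-M(Q^* )\big)\\ -(1+\beta)Dx_2+\beta Dx_1+\gamma DP\big(M(x_1+Q^* )-M(Q^* )\big)\end{bmatrix},$$ and every solution converges to the origin as $t\to\infty$. Equivalently, every solution of $\dot Q^A=DR+\gamma DPM(Q^B)-(1+\beta)DQ^A+\beta DQ^B$, $\dot Q^B=DR+\gamma DPM(Q^A)-(1+\beta)DQ^B+\beta DQ^A$ satisfies $(Q^A(t),Q^B(t))\to(Q^*,Q^* )$.
   Context: Finite MDP with states $\mathcal S$, actions $\mathcal A$, kernel $P$, expected reward vector $R\in\mathbb R^n$, discount $\gamma\in[0,1)$; $n=|\mathcal S||\mathcal A|$. $D$ is the diagonal matrix of a probability distribution $d$ on $\mathcal S\times\mathcal A$ with $d(s,a)>0$; $P$ is the $n\times|\mathcal S|$ matrix with row $(s,a)$ equal to $P(\cdot\mid s,a)$; $M(Q)(s)=\max_aQ(s,a)$; $Q^*=R+\gamma PM(Q^* )$ is the optimal Q-function. *)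

theory Defs
  imports "HOL-Analysis.Analysis"
begin

text \<open>Q-functions are vectors indexed by state-action pairs, i.e. elements of
  real^('s \<times> 'a) with finite state type 's and finite action type 'a (n = |S||A|).
  The transition kernel is the n x |S| matrix P with row (s,a) equal to P(.|s,a).\<close>

definition diag_mat :: "real^'n \<Rightarrow> real^'n^'n" where
  "diag_mat d = (\<chi> i j. if i = j then d $ i else 0)"

definition Mmax :: "real^('s::finite \<times> 'a::finite) \<Rightarrow> real^'s" where
  "Mmax Q = (\<chi> s. Max (range (\<lambda>a. Q $ (s, a))))"

definition err_field ::
  "real^('s::finite \<times> 'a::finite) \<Rightarrow> real^'s^('s \<times> 'a) \<Rightarrow> real \<Rightarrow> real
   \<Rightarrow> real^('s \<times> 'a) \<Rightarrow> (real^('s \<times> 'a)) \<times> (real^('s \<times> 'a))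
   \<Rightarrow> (real^('s \<times> 'a)) \<times> (real^('s \<times> 'a))" where
  "err_field d P \<gamma> \<beta> Qs x =
     (let D = diag_mat d; x1 = fst x; x2 = snd x in
      (- (1 + \<beta>) *\<^sub>R (D *v x1) + \<beta> *\<^sub>R (D *v x2)
         + \<gamma> *\<^sub>R (D *v (P *v (Mmax (x2 + Qs) - Mmax Qs))),
       - (1 + \<beta>) *\<^sub>R (D *v x2) + \<beta> *\<^sub>R (D *v x1)
         + \<gamma> *\<^sub>R (D *v (P *v (Mmax (x1 + Qs) - Mmax Qs)))))"

definition qab_field ::
  "real^('s::finite \<times> 'a::finite) \<Rightarrow> real^'s^('s \<times> 'a) \<Rightarrow> real^('s \<times> 'a) \<Rightarrow> real \<Rightarrow> real
   \<Rightarrow> (real^('s \<times> 'a)) \<times> (real^('s \<times> 'a))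
   \<Rightarrow> (real^('s \<times> 'a)) \<times> (real^('s \<times> 'a))" where
  "qab_field d P R \<gamma> \<beta> q =
     (let D = diag_mat d; QA = fst q; QB = snd q in
      (D *v R + \<gamma> *\<^sub>R (D *v (P *v Mmax QB)) - (1 + \<beta>) *\<^sub>R (D *v QA) + \<beta> *\<^sub>R (D *v QB),
       D *v R + \<gamma> *\<^sub>R (D *v (P *v Mmax QA)) - (1 + \<beta>) *\<^sub>R (D *v QB) + \<beta> *\<^sub>R (D *v QA)))"

end

theory Submission imports Defs begin

text \<open>Let x = (x1, x2) solve the error dynamics and let B be the largest of the 4n
  signed coordinates +-x1(i), +-x2(i), i.e. the sup norm of x. If x1(i) = B, then
  beta x2(i) <= beta B, and since M is nonexpansive in the sup norm and P is stochastic,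
  the gamma-term is at most gamma B; hence f1(i) <= -d(i) (1 - gamma) B, and likewise for
  the other signed coordinates. So f vanishes only at 0, and along a solution no signed
  coordinate can reach the barrier K exp(-c t) with c = (min d) (1 - gamma) / 2: at a first
  contact its derivative would lie below the barrier's. Substituting QA = Q* + x1, QB = Q* + x2 turns the Q-dynamics into the
  error dynamics.\<close>

fun signed_coord :: "bool \<times> bool \<times> 'i \<Rightarrow> (real^'i::finite) \<times> (real^'i) \<Rightarrow> real" where
  "signed_coord (first, pos, i) z = (if pos then 1 else -1) * ((if first then fst z else snd z) $ i)"

lemma bounded_linear_signed_coord: "bounded_linear (signed_coord k)"
  unfolding linear_conv_bounded_linear[symmetric]
  by (cases k) (auto intro!: linearI simp: algebra_simps)

lemma signed_coord_le_norm: "signed_coord k z \<le> norm z"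
proof (cases k)
  case (fields first pos i)
  have "\<bar>fst z $ i\<bar> \<le> norm z" "\<bar>snd z $ i\<bar> \<le> norm z"
    using component_le_norm_cart norm_fst_le[of "fst z" "snd z"] norm_snd_le[of "snd z" "fst z"]
    by (metis order_trans prod.collapse)+
  then show ?thesis
    using fields by auto
qed

lemma abs_nth_le_if_signed_coords_le:
  assumes "\<forall>k. signed_coord k z \<le> B"
  shows "\<bar>fst z $ i\<bar> \<le> B" "\<bar>snd z $ i\<bar> \<le> B"
  using assms[rule_format, of "(True, True, i)"] assms[rule_format, of "(True, False, i)"]
    assms[rule_format, of "(False, True, i)"] assms[rule_format, of "(False, False, i)"]
  by auto

lemma norm_le_if_signed_coords_le:
  fixes z :: "(real^'i::finite) \<times> (real^'i)"
  assumes "\<forall>k. signed_coord k z \<le> B"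
  shows "norm z \<le> 2 * real CARD('i) * B"
proof -
  have "norm z \<le> norm (fst z) + norm (snd z)"
    using norm_Pair_le[of "fst z" "snd z"] by simp
  also have "\<dots> \<le> (\<Sum>i\<in>UNIV. \<bar>fst z $ i\<bar>) + (\<Sum>i\<in>UNIV. \<bar>snd z $ i\<bar>)"
    by (intro add_mono norm_le_l1_cart)
  also have "\<dots> \<le> (\<Sum>i\<in>(UNIV::'i set). B) + (\<Sum>i\<in>(UNIV::'i set). B)"
    by (intro add_mono sum_mono abs_nth_le_if_signed_coords_le[OF assms])
  finally show ?thesis by (simp add: algebra_simps)
qed

lemma diag_mat_mult_vec_nth: "(diag_mat d *v v) $ i = d $ i * v $ i"
proof -
  have "(diag_mat d *v v) $ i = (\<Sum>j\<in>UNIV. if i = j then d $ i * v $ i else 0)"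
    unfolding diag_mat_def matrix_vector_mult_def by (simp only: vec_lambda_beta, rule sum.cong) auto
  then show ?thesis by simp
qed

lemma Mmax_add_diff_abs_le:
  assumes "\<forall>a. \<bar>x $ (s, a)\<bar> \<le> B"
  shows "\<bar>(Mmax (x + Q) - Mmax Q) $ s\<bar> \<le> B"
proof -
  have "Max (range (\<lambda>a. (x + Q) $ (s, a))) \<le> Max (range (\<lambda>a. Q $ (s, a))) + B"
  proof (subst Max_le_iff, auto)
    fix a
    have "Q $ (s, a) \<le> Max (range (\<lambda>a. Q $ (s, a)))" by (rule Max_ge) auto
    then show "x $ (s, a) + Q $ (s, a) \<le> Max (range (\<lambda>a. Q $ (s, a))) + B"
      using assms abs_le_D1 add_mono by (metis add.commute)
  qed
  moreover have "Max (range (\<lambda>a. Q $ (s, a))) \<le> Max (range (\<lambda>a. (x + Q) $ (s, a))) + B"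
  proof (subst Max_le_iff, auto)
    fix a
    have "x $ (s, a) + Q $ (s, a) \<le> Max (range (\<lambda>a. x $ (s, a) + Q $ (s, a)))" by (rule Max_ge) auto
    then show "Q $ (s, a) \<le> Max (range (\<lambda>a. x $ (s, a) + Q $ (s, a))) + B"
      using assms[rule_format, of a] by linarith
  qed
  moreover have "(Mmax (x + Q) - Mmax Q) $ s
      = Max (range (\<lambda>a. (x + Q) $ (s, a))) - Max (range (\<lambda>a. Q $ (s, a)))"
    by (simp add: Mmax_def)
  ultimately show ?thesis
    by linarith
qed

lemma stochastic_mult_vec_abs_le:
  assumes "\<forall>i j. P $ i $ j \<ge> (0::real)" "\<forall>i. (\<Sum>j\<in>UNIV. P $ i $ j) = 1"
    and "\<forall>s. \<bar>w $ s\<bar> \<le> B"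
  shows "\<bar>(P *v w) $ i\<bar> \<le> B"
proof -
  have "\<bar>(P *v w) $ i\<bar> = \<bar>\<Sum>j\<in>UNIV. P $ i $ j * w $ j\<bar>" by (simp add: matrix_vector_mult_def)
  also have "\<dots> \<le> (\<Sum>j\<in>UNIV. \<bar>P $ i $ j * w $ j\<bar>)" by (rule sum_abs)
  also have "\<dots> \<le> (\<Sum>j\<in>UNIV. P $ i $ j * B)"
    by (rule sum_mono) (use assms in \<open>auto simp: abs_mult intro: mult_left_mono\<close>)
  also have "\<dots> = B" using assms(2) by (simp add: sum_distrib_right[symmetric])
  finally show ?thesis .
qed

lemma err_field_nth:
  "fst (err_field d P \<gamma> \<beta> Qs z) $ i = d $ i * (-(1 + \<beta>) * fst z $ i + \<beta> * snd z $ i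
     + \<gamma> * (P *v (Mmax (snd z + Qs) - Mmax Qs)) $ i)"
  "snd (err_field d P \<gamma> \<beta> Qs z) $ i = d $ i * (-(1 + \<beta>) * snd z $ i + \<beta> * fst z $ i
     + \<gamma> * (P *v (Mmax (fst z + Qs) - Mmax Qs)) $ i)"
  by (simp_all add: err_field_def Let_def diag_mat_mult_vec_nth algebra_simps)

lemma signed_coord_err_field_at_max:
  fixes z :: "(real^('s::finite \<times> 'a::finite)) \<times> (real^('s \<times> 'a))"
  assumes d_pos: "\<forall>i. d $ i > 0" and P_nonneg: "\<forall>i j. P $ i $ j \<ge> 0"
    and P_rows: "\<forall>i. (\<Sum>j\<in>UNIV. P $ i $ j) = 1"
    and gamma: "0 \<le> \<gamma>" and beta: "0 \<le> \<beta>"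
    and max: "\<forall>k. signed_coord k z \<le> B" and attained: "signed_coord (first, pos, i) z = B"
  shows "signed_coord (first, pos, i) (err_field d P \<gamma> \<beta> Qs z) \<le> - d $ i * (1 - \<gamma>) * B"
proof -
  define s :: real where "s = (if pos then 1 else -1)"
  define u where "u = (if first then fst z else snd z)"
  define v where "v = (if first then snd z else fst z)"
  define G where "G = (P *v (Mmax (v + Qs) - Mmax Qs)) $ i"
  have su: "s * u $ i = B"
    using attained by (simp add: s_def u_def)
  have sv: "s * v $ i \<le> B"
    using max[rule_format, of "(\<not> first, pos, i)"] by (cases first) (auto simp: s_def v_def)
  have "\<forall>j. \<bar>v $ j\<bar> \<le> B"
    using abs_nth_le_if_signed_coords_le[OF max] by (simp add: v_def)
  then have "\<bar>G\<bar> \<le> B"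
    unfolding G_def by (intro stochastic_mult_vec_abs_le[OF P_nonneg P_rows] allI Mmax_add_diff_abs_le) auto
  then have sG: "s * G \<le> B"
    by (auto simp: s_def)
  have "signed_coord (first, pos, i) (err_field d P \<gamma> \<beta> Qs z)
      = d $ i * (-(1 + \<beta>) * (s * u $ i) + \<beta> * (s * v $ i) + \<gamma> * (s * G))"
    by (cases first) (auto simp: s_def u_def v_def G_def err_field_nth algebra_simps)
  also have "\<dots> \<le> d $ i * (-(1 + \<beta>) * B + \<beta> * B + \<gamma> * B)"
    using less_imp_le[OF d_pos[rule_format, of i]] su mult_left_mono[OF sv beta] mult_left_mono[OF sG gamma]
    by (intro mult_left_mono) auto
  also have "\<dots> = - d $ i * (1 - \<gamma>) * B"
    by (simp add: algebra_simps)
  finally show ?thesis .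
qed

lemma err_field_eq_0_iff:
  fixes z :: "(real^('s::finite \<times> 'a::finite)) \<times> (real^('s \<times> 'a))"
  assumes d_pos: "\<forall>i. d $ i > 0" and P_nonneg: "\<forall>i j. P $ i $ j \<ge> 0"
    and P_rows: "\<forall>i. (\<Sum>j\<in>UNIV. P $ i $ j) = 1"
    and gamma: "0 \<le> \<gamma>" "\<gamma> < 1" and beta: "0 \<le> \<beta>"
  shows "err_field d P \<gamma> \<beta> Qs z = 0 \<longleftrightarrow> z = 0"
proof
  assume equilibrium: "err_field d P \<gamma> \<beta> Qs z = 0"
  define B where "B = Max (range (\<lambda>k. signed_coord k z))"
  have max: "\<forall>k. signed_coord k z \<le> B"
    unfolding B_def by (auto intro: Max_ge)
  have "B \<in> range (\<lambda>k. signed_coord k z)"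
    unfolding B_def by (intro Max_in) auto
  then obtain first pos i where attained: "signed_coord (first, pos, i) z = B"
    by (metis rangeE prod_cases3)
  have "0 \<le> - d $ i * (1 - \<gamma>) * B"
    using signed_coord_err_field_at_max[OF d_pos P_nonneg P_rows gamma(1) beta max attained, where Qs = Qs]
    unfolding equilibrium by (cases first) (simp_all add: zero_prod_def)
  moreover have "d $ i * (1 - \<gamma>) > 0"
    using d_pos[rule_format, of i] gamma by simp
  ultimately have "B \<le> 0"
    by (metis mult_minus_left neg_0_le_iff_le not_le mult_pos_pos)
  then have "norm z \<le> 0"
    using norm_le_if_signed_coords_le[OF max] mult_nonneg_nonpos[of "2 * real CARD('s \<times> 'a)" B]
    by linarith
  then show "z = 0" by simp
qed (simp add: err_field_def zero_prod_def)

lemma finite_family_stays_negative: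
  fixes \<psi> \<psi>' :: "'k::finite \<Rightarrow> real \<Rightarrow> real"
  assumes initial: "\<And>k. \<psi> k 0 < 0"
    and deriv: "\<And>k t. t \<ge> 0 \<Longrightarrow> (\<psi> k has_real_derivative \<psi>' k t) (at t within {0..})"
    and contact: "\<And>k t. t > 0 \<Longrightarrow> \<forall>j. \<psi> j t \<le> 0 \<Longrightarrow> \<psi> k t = 0 \<Longrightarrow> \<psi>' k t < 0"
    and "t \<ge> 0"
  shows "\<psi> k t < 0"
proof (rule ccontr)
  define S where "S = {t. t \<ge> 0 \<and> (\<exists>k. 0 \<le> \<psi> k t)}"
  assume "\<not> \<psi> k t < 0"
  then have "S \<noteq> {}"
    using \<open>t \<ge> 0\<close> by (auto simp: S_def not_less)
  have cont: "continuous_on {0..} (\<psi> j)" for j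
    using deriv by (auto simp: continuous_on_eq_continuous_within intro: DERIV_continuous)
  have "closed S"
  proof -
    have "S = (\<Union>j. {0..} \<inter> \<psi> j -` {0..})"
      by (auto simp: S_def)
    then show ?thesis
      by (simp only:) (intro closed_UN ballI continuous_closed_preimage cont, auto)
  qed
  define t0 where "t0 = Inf S"
  have "bdd_below S"
    by (auto simp: S_def intro: bdd_belowI[of _ 0])
  then have "t0 \<in> S"
    unfolding t0_def using \<open>S \<noteq> {}\<close> \<open>closed S\<close> by (intro closed_contains_Inf)
  then obtain k0 where "t0 \<ge> 0" and "0 \<le> \<psi> k0 t0"
    by (auto simp: S_def)
  have before: "\<psi> j s < 0" if "0 \<le> s" "s < t0" for j s
  proof (rule ccontr)
    assume "\<not> \<psi> j s < 0"
    then have "s \<in> S"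
      using \<open>0 \<le> s\<close> by (auto simp: S_def not_less)
    then have "t0 \<le> s"
      unfolding t0_def using \<open>bdd_below S\<close> by (rule cInf_lower)
    then show False
      using \<open>s < t0\<close> by simp
  qed
  have "t0 > 0"
    using initial[of k0] \<open>0 \<le> \<psi> k0 t0\<close> \<open>t0 \<ge> 0\<close> by (cases "t0 = 0") auto
  have at_t0: "\<psi> j t0 \<le> 0" for j
  proof -
    have "closed ({0..t0} \<inter> \<psi> j -` {..0})"
      by (auto intro!: continuous_closed_preimage intro: continuous_on_subset[OF cont])
    moreover have "{0..<t0} \<subseteq> {0..t0} \<inter> \<psi> j -` {..0}"
      using before by (auto simp: less_imp_le)
    ultimately have "closure {0..<t0} \<subseteq> {0..t0} \<inter> \<psi> j -` {..0}"
      by (rule closure_minimal[rotated])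
    moreover have "t0 \<in> closure {0..<t0}"
      using \<open>t0 > 0\<close> by simp
    ultimately have "t0 \<in> \<psi> j -` {..0}"
      by blast
    then show ?thesis
      by simp
  qed
  then have "\<psi> k0 t0 = 0"
    using \<open>0 \<le> \<psi> k0 t0\<close> by (simp add: order_antisym)
  then have "\<psi>' k0 t0 < 0"
    using contact \<open>t0 > 0\<close> at_t0 by blast
  from has_real_derivative_neg_dec_left[OF deriv[OF \<open>t0 \<ge> 0\<close>] this]
  obtain \<delta> where "\<delta> > 0"
    and decreasing: "\<And>h. h > 0 \<Longrightarrow> t0 - h \<in> {0..} \<Longrightarrow> h < \<delta> \<Longrightarrow> \<psi> k0 t0 < \<psi> k0 (t0 - h)"
    by blast
  define h where "h = min \<delta> t0 / 2"
  have "h > 0" "h < \<delta>" "h \<le> t0"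
    using \<open>\<delta> > 0\<close> \<open>t0 > 0\<close> by (auto simp: h_def)
  then have "0 < \<psi> k0 (t0 - h)"
    using decreasing \<open>\<psi> k0 t0 = 0\<close> by fastforce
  moreover have "\<psi> k0 (t0 - h) < 0"
    using before \<open>h > 0\<close> \<open>h \<le> t0\<close> by simp
  ultimately show False by simp
qed

lemma err_field_solution_tendsto_0:
  fixes x :: "real \<Rightarrow> (real^('s::finite \<times> 'a::finite)) \<times> (real^('s \<times> 'a))"
  assumes d_pos: "\<forall>i. d $ i > 0" and P_nonneg: "\<forall>i j. P $ i $ j \<ge> 0"
    and P_rows: "\<forall>i. (\<Sum>j\<in>UNIV. P $ i $ j) = 1"
    and gamma: "0 \<le> \<gamma>" "\<gamma> < 1" and beta: "0 \<le> \<beta>"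
    and solution: "\<forall>t\<ge>0. (x has_vector_derivative err_field d P \<gamma> \<beta> Qs (x t)) (at t within {0..})"
  shows "(x \<longlongrightarrow> 0) at_top"
proof -
  define F where "F = err_field d P \<gamma> \<beta> Qs"
  define c where "c = Min (range (($) d)) * (1 - \<gamma>) / 2"
  have "Min (range (($) d)) > 0"
    using d_pos by (subst Min_gr_iff) auto
  then have "c > 0"
    using gamma by (simp add: c_def)
  have rate: "2 * c \<le> d $ i * (1 - \<gamma>)" for i
    using gamma by (auto simp: c_def intro!: mult_right_mono Min_le)
  define K where "K = norm (x 0) + 1"
  define barrier where "barrier t = K * exp (- c * t)" for t
  have barrier_pos: "barrier t > 0" for t
    by (simp add: barrier_def K_def add_nonneg_pos)
  have below: "signed_coord k (x t) - barrier t < 0" if "t \<ge> 0" for k t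
  proof (rule finite_family_stays_negative[where \<psi> = "\<lambda>k t. signed_coord k (x t) - barrier t"
        and \<psi>' = "\<lambda>k t. signed_coord k (F (x t)) + c * barrier t"])
    show "signed_coord k (x 0) - barrier 0 < 0" for k
      using signed_coord_le_norm[of k "x 0"] by (simp add: barrier_def K_def)
    show "((\<lambda>t. signed_coord k (x t) - barrier t) has_real_derivative
        signed_coord k (F (x t)) + c * barrier t) (at t within {0..})" if "t \<ge> 0" for k t
    proof -
      have "((\<lambda>t. signed_coord k (x t)) has_real_derivative signed_coord k (F (x t))) (at t within {0..})"
        using bounded_linear.has_vector_derivative[OF bounded_linear_signed_coord solution[rule_format, OF that]]
        by (simp add: F_def has_real_derivative_iff_has_vector_derivative)
      moreover have "(barrier has_real_derivative - c * barrier t) (at t within {0..})"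
        unfolding barrier_def by (auto intro!: derivative_eq_intros)
      ultimately show ?thesis
        using DERIV_diff by fastforce
    qed
    show "signed_coord k (F (x t)) + c * barrier t < 0"
      if "t > 0" "\<forall>j. signed_coord j (x t) - barrier t \<le> 0" "signed_coord k (x t) - barrier t = 0" for k t
    proof (cases k rule: prod_cases3)
      case (fields first pos i)
      have "signed_coord k (F (x t)) \<le> - d $ i * (1 - \<gamma>) * barrier t"
        unfolding F_def fields using that
        by (intro signed_coord_err_field_at_max[OF d_pos P_nonneg P_rows gamma(1) beta]) (auto simp: fields)
      also have "\<dots> \<le> - 2 * (c * barrier t)"
        using rate[of i] barrier_pos[of t] by simp
      finally have "signed_coord k (F (x t)) \<le> - 2 * (c * barrier t)" .
      moreover have "c * barrier t > 0"
        using \<open>c > 0\<close> barrier_pos[of t] by simp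
      ultimately show ?thesis
        by linarith
    qed
  qed (rule that)
  have norm_bound: "norm (x t) \<le> 2 * real CARD('s \<times> 'a) * barrier t" if "t \<ge> 0" for t
    using below[OF that] by (intro norm_le_if_signed_coords_le) (simp add: less_imp_le)
  have "((\<lambda>t. 2 * real CARD('s \<times> 'a) * barrier t) \<longlongrightarrow> 0) at_top"
  proof -
    have "filterlim (\<lambda>t. - c * t) at_bot at_top"
      using \<open>c > 0\<close> by (simp add: filterlim_uminus_at_bot filterlim_tendsto_pos_mult_at_top[OF tendsto_const _ filterlim_ident])
    then have "((\<lambda>t. exp (- c * t)) \<longlongrightarrow> 0) at_top"
      by (rule filterlim_compose[OF exp_at_bot])
    then show ?thesis
      unfolding barrier_def by (intro tendsto_mult_right_zero)
  qed
  then show ?thesis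
    by (rule Lim_null_comparison[rotated]) (use norm_bound in \<open>auto simp: eventually_at_top_linorder\<close>)
qed

lemma qab_field_eq_err_field:
  assumes "Qs = R + \<gamma> *\<^sub>R (P *v Mmax Qs)"
  shows "qab_field d P R \<gamma> \<beta> q = err_field d P \<gamma> \<beta> Qs (q - (Qs, Qs))"
proof -
  have R: "R = Qs - \<gamma> *\<^sub>R (P *v Mmax Qs)"
    using assms by (simp add: algebra_simps)
  show ?thesis
    unfolding qab_field_def err_field_def Let_def R
    by (simp add: prod_eq_iff vec_eq_iff diag_mat_mult_vec_nth matrix_vector_mult_diff_distrib)
      (simp add: algebra_simps)
qed

theorem mainTheorem19:
  fixes d R Qs :: "real^('s::finite \<times> 'a::finite)"
    and P :: "real^'s^('s \<times> 'a)"
    and \<gamma> \<beta> :: real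
  assumes d_pos: "\<forall>i. d $ i > 0"
    and d_sum: "(\<Sum>i\<in>UNIV. d $ i) = 1"
    and P_nonneg: "\<forall>i j. P $ i $ j \<ge> 0"
    and P_rows: "\<forall>i. (\<Sum>j\<in>UNIV. P $ i $ j) = 1"
    and gamma: "0 \<le> \<gamma>" "\<gamma> < 1"
    and Qs_opt: "Qs = R + \<gamma> *\<^sub>R (P *v Mmax Qs)"
    and beta: "\<beta> > 0"
  shows "(\<forall>z. err_field d P \<gamma> \<beta> Qs z = 0 \<longleftrightarrow> z = 0)
    \<and> (\<forall>x :: real \<Rightarrow> (real^('s \<times> 'a)) \<times> (real^('s \<times> 'a)).
          (\<forall>t\<ge>0. (x has_vector_derivative err_field d P \<gamma> \<beta> Qs (x t)) (at t within {0..}))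
          \<longrightarrow> (x \<longlongrightarrow> 0) at_top)
    \<and> (\<forall>QA QB :: real \<Rightarrow> real^('s \<times> 'a).
          (\<forall>t\<ge>0. ((\<lambda>t. (QA t, QB t)) has_vector_derivative
                     qab_field d P R \<gamma> \<beta> (QA t, QB t)) (at t within {0..}))
          \<longrightarrow> ((\<lambda>t. (QA t, QB t)) \<longlongrightarrow> (Qs, Qs)) at_top)"
proof (intro conjI allI impI)
  note hyps = d_pos P_nonneg P_rows gamma less_imp_le[OF beta]
  show "err_field d P \<gamma> \<beta> Qs z = 0 \<longleftrightarrow> z = 0" for z
    by (rule err_field_eq_0_iff[OF hyps])
  show "(x \<longlongrightarrow> 0) at_top"
    if "\<forall>t\<ge>0. (x has_vector_derivative err_field d P \<gamma> \<beta> Qs (x t)) (at t within {0..})"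
    for x :: "real \<Rightarrow> (real^('s \<times> 'a)) \<times> (real^('s \<times> 'a))"
    using that by (rule err_field_solution_tendsto_0[OF hyps])
  fix QA QB :: "real \<Rightarrow> real^('s \<times> 'a)"
  assume "\<forall>t\<ge>0. ((\<lambda>t. (QA t, QB t)) has_vector_derivative
                     qab_field d P R \<gamma> \<beta> (QA t, QB t)) (at t within {0..})"
  then have "\<forall>t\<ge>0. ((\<lambda>t. (QA t, QB t) - (Qs, Qs)) has_vector_derivative
      err_field d P \<gamma> \<beta> Qs ((QA t, QB t) - (Qs, Qs))) (at t within {0..})"
    by (simp only: has_vector_derivative_diff_const qab_field_eq_err_field[OF Qs_opt])
  then have "((\<lambda>t. (QA t, QB t) - (Qs, Qs)) \<longlongrightarrow> 0) at_top"
    by (rule err_field_solution_tendsto_0[OF hyps])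
  then show "((\<lambda>t. (QA t, QB t)) \<longlongrightarrow> (Qs, Qs)) at_top"
    by (simp only: LIM_zero_iff)
qed

end
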